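(* For every positive integer $t$, $md_t \leq \left\lceil \frac{t+1}{2} \right\rceil$.
   Context: Let $t$ be a positive integer (the number of topics). A voter matrix with $t$ topics is a matrix $V\in\{Y,N\}^{n\times t}$ for some positive integer $n$ (the number of voters; rows are voters), subject to the standing assumption that in every column the number of entries $Y$ is at least the number of entries $N$ (so $Y$ is the majority opinion on every topic). $\mathcal{V}_t$ denotes the set of all voter matrices with $t$ topics and any number of voters. A proposal is a vector $p\in\{Y,N\}^t$. A voter (row) $v$ supports $p$ if the Hamming distance between $v$ and $p$ is at most $t/2$. A proposal $p$ is supported by $V$ if at least $n/2$ of the rows of $V$ support $p$. The number of majority decisions of a proposal is its number of entries $Y$. For $V$, $md_V$ is the maximum number $m$ such that there exists a proposal supported by $V$ with $m$ majority decisions, and $md_t=\min_{V\in\mathcal{V}_t} md_V$. *)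

theory Defs
  imports Complex_Main
begin

text \<open>Opinions: True = Y, False = N. A voter (row) and a proposal are bool lists
of length t. A voter matrix is a nonempty list of rows.\<close>

definition voter_matrix :: "nat \<Rightarrow> bool list list \<Rightarrow> bool" where
  "voter_matrix t V \<longleftrightarrow> V \<noteq> [] \<and> (\<forall>v\<in>set V. length v = t) \<and>
     (\<forall>j<t. card {i. i < length V \<and> \<not> (V ! i ! j)} \<le> card {i. i < length V \<and> V ! i ! j})"

definition hamming :: "nat \<Rightarrow> bool list \<Rightarrow> bool list \<Rightarrow> nat" where
  "hamming t v p = card {j. j < t \<and> v ! j \<noteq> p ! j}"

definition supports :: "nat \<Rightarrow> bool list \<Rightarrow> bool list \<Rightarrow> bool" where
  "supports t v p \<longleftrightarrow> 2 * hamming t v p \<le> t"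

definition supported :: "nat \<Rightarrow> bool list list \<Rightarrow> bool list \<Rightarrow> bool" where
  "supported t V p \<longleftrightarrow> length V \<le> 2 * card {i. i < length V \<and> supports t (V ! i) p}"

definition num_md :: "nat \<Rightarrow> bool list \<Rightarrow> nat" where
  "num_md t p = card {j. j < t \<and> p ! j}"

definition md_V :: "nat \<Rightarrow> bool list list \<Rightarrow> nat" where
  "md_V t V = Max {num_md t p | p. length p = t \<and> supported t V p}"

definition md :: "nat \<Rightarrow> nat" where
  "md t = Inf {md_V t V | V. voter_matrix t V}"

end

theory Submission
  imports Defs
begin

text \<open>Take t voters, the i-th of which votes Y on topic i only, together with t - 2 voters
voting Y everywhere; every topic then has exactly t - 1 votes of each kind. The all-N
proposal is supported by each of the first t voters. A proposal with m majority decisions is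
at Hamming distance at least m - 1 from each of the first t voters, so if m - 1 > t/2 only
the t - 2 unanimous voters support it, which is less than half. Hence md_t is at most
t div 2 + 1, which is the ceiling of (t + 1)/2; for t = 1 the trivial bound md_t \<le> t
suffices.\<close>

lemma num_md_le: "num_md t p \<le> t"
  unfolding num_md_def by (rule order.trans[OF card_mono[of "{..<t}"]]) auto

lemma num_md_le_hamming_add: "num_md t p \<le> num_md t v + hamming t v p"
proof -
  have "{j. j < t \<and> p ! j} \<subseteq> {j. j < t \<and> v ! j} \<union> {j. j < t \<and> v ! j \<noteq> p ! j}"
    by auto
  then have "num_md t p \<le> card ({j. j < t \<and> v ! j} \<union> {j. j < t \<and> v ! j \<noteq> p ! j})"
    unfolding num_md_def by (intro card_mono) auto
  also have "\<dots> \<le> num_md t v + hamming t v p"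
    unfolding num_md_def hamming_def by (rule card_Un_le)
  finally show ?thesis .
qed

lemma md_le_md_V: "voter_matrix t V \<Longrightarrow> md t \<le> md_V t V"
  unfolding md_def by (intro cInf_lower) auto

lemma md_V_le:
  assumes "length p\<^sub>0 = t" "supported t V p\<^sub>0"
    and "\<And>p. length p = t \<Longrightarrow> supported t V p \<Longrightarrow> num_md t p \<le> K"
  shows "md_V t V \<le> K"
proof -
  have "{num_md t p | p. length p = t \<and> supported t V p} \<subseteq> {..t}"
    using num_md_le by auto
  then have "finite {num_md t p | p. length p = t \<and> supported t V p}"
    by (rule finite_subset) simp
  then show ?thesis
    unfolding md_V_def using assms by (subst Max_le_iff) auto
qed

lemma md_le_topics: "md t \<le> t"
proof -
  let ?V = "[replicate t True]"
  have "voter_matrix t ?V"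
    unfolding voter_matrix_def by (auto simp: Collect_conv_if)
  moreover have "supports t (replicate t True) (replicate t True)"
    by (simp add: supports_def hamming_def)
  then have "supported t ?V (replicate t True)"
    unfolding supported_def by (simp add: Collect_conv_if)
  then have "md_V t ?V \<le> t"
    by (rule md_V_le[rotated]) (auto simp: num_md_le)
  ultimately show ?thesis
    using md_le_md_V order.trans by blast
qed

definition unit_row :: "nat \<Rightarrow> nat \<Rightarrow> bool list" where
  "unit_row t i = map (\<lambda>j. j = i) [0..<t]"

definition unit_matrix :: "nat \<Rightarrow> nat \<Rightarrow> bool list list" where
  "unit_matrix t k = map (unit_row t) [0..<t] @ replicate k (replicate t True)"

lemma length_unit_matrix: "length (unit_matrix t k) = t + k"
  by (simp add: unit_matrix_def)

lemma unit_matrix_nth: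
  "i < t + k \<Longrightarrow> j < t \<Longrightarrow> unit_matrix t k ! i ! j = (i < t \<longrightarrow> j = i)"
  by (simp add: unit_matrix_def unit_row_def nth_append)

lemma unit_matrix_nth_unit_row: "i < t \<Longrightarrow> unit_matrix t k ! i = unit_row t i"
  by (simp add: unit_matrix_def nth_append)

lemma num_md_unit_row: "i < t \<Longrightarrow> num_md t (unit_row t i) = 1"
proof -
  assume "i < t"
  then have "{j. j < t \<and> unit_row t i ! j} = {i}"
    by (auto simp: unit_row_def)
  then show ?thesis
    by (simp add: num_md_def)
qed

lemma voter_matrix_unit_matrix:
  assumes "0 < t" "t \<le> k + 2"
  shows "voter_matrix t (unit_matrix t k)"
proof -
  have "card {i. i < t + k \<and> \<not> unit_matrix t k ! i ! j}
      \<le> card {i. i < t + k \<and> unit_matrix t k ! i ! j}" if "j < t" for j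
  proof -
    have "{i. i < t + k \<and> \<not> unit_matrix t k ! i ! j} = {..<t} - {j}"
      using that by (auto simp: unit_matrix_nth)
    moreover have "{i. i < t + k \<and> unit_matrix t k ! i ! j} = insert j {t..<t + k}"
      using that by (auto simp: unit_matrix_nth)
    ultimately show ?thesis
      using that assms(2) by simp
  qed
  moreover have "v \<in> set (unit_matrix t k) \<Longrightarrow> length v = t" for v
    by (auto simp: unit_matrix_def unit_row_def)
  ultimately show ?thesis
    using assms(1) unfolding voter_matrix_def length_unit_matrix
    by (auto simp: unit_matrix_def)
qed

lemma supported_unit_matrix_all_N:
  assumes "2 \<le> t" "k \<le> t"
  shows "supported t (unit_matrix t k) (replicate t False)"
proof -
  have "supports t (unit_matrix t k ! i) (replicate t False)" if "i < t" for i
  proof -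
    have "{j. j < t \<and> unit_matrix t k ! i ! j \<noteq> replicate t False ! j} = {i}"
      using that by (auto simp: unit_matrix_nth)
    then show ?thesis
      using assms(1) by (simp add: supports_def hamming_def)
  qed
  then have "{..<t} \<subseteq> {i. i < t + k \<and> supports t (unit_matrix t k ! i) (replicate t False)}"
    by auto
  from card_mono[OF _ this]
  have "t \<le> card {i. i < t + k \<and> supports t (unit_matrix t k ! i) (replicate t False)}"
    by simp
  then show ?thesis
    unfolding supported_def length_unit_matrix
    using assms(2) by simp
qed

lemma num_md_le_if_supported_unit_matrix:
  assumes "k < t" "supported t (unit_matrix t k) p"
  shows "num_md t p \<le> t div 2 + 1"
proof (rule ccontr)
  assume "\<not> ?thesis"
  then have far: "t < 2 * (num_md t p - 1)"
    by simp
  have "\<not> supports t (unit_matrix t k ! i) p" if "i < t" for i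
  proof -
    have "num_md t p \<le> 1 + hamming t (unit_row t i) p"
      using num_md_le_hamming_add num_md_unit_row[OF that] by metis
    then show ?thesis
      using far that by (simp add: supports_def unit_matrix_nth_unit_row)
  qed
  then have "{i. i < t + k \<and> supports t (unit_matrix t k ! i) p} \<subseteq> {t..<t + k}"
    by (auto intro!: leI)
  from card_mono[OF _ this]
  have "card {i. i < t + k \<and> supports t (unit_matrix t k ! i) p} \<le> k"
    by simp
  then show False
    using assms unfolding supported_def length_unit_matrix by simp
qed

lemma md_le_half_succ:
  assumes "2 \<le> t"
  shows "md t \<le> t div 2 + 1"
proof -
  let ?V = "unit_matrix t (t - 2)"
  have "md_V t ?V \<le> t div 2 + 1"
  proof (rule md_V_le[OF _ supported_unit_matrix_all_N])
    show "num_md t p \<le> t div 2 + 1" if "supported t ?V p" for p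
      using assms that by (intro num_md_le_if_supported_unit_matrix) auto
  qed (use assms in auto)
  moreover have "voter_matrix t ?V"
    using assms by (intro voter_matrix_unit_matrix) auto
  ultimately show ?thesis
    using md_le_md_V order.trans by blast
qed

lemma ceiling_succ_half: "\<lceil>(real t + 1) / 2\<rceil> = int (t div 2 + 1)"
proof (rule ceiling_unique)
  define q where "q = t div 2"
  have "t = 2 * q \<or> t = 2 * q + 1"
    unfolding q_def by presburger
  then show "real_of_int (int (t div 2 + 1)) - 1 < (real t + 1) / 2"
    and "(real t + 1) / 2 \<le> real_of_int (int (t div 2 + 1))"
    unfolding q_def[symmetric] by auto
qed

theorem lemma4p2:
  fixes t :: nat
  assumes "0 < t"
  shows "real (md t) \<le> real_of_int \<lceil>(real t + 1) / 2\<rceil>"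
proof -
  have "md t \<le> t div 2 + 1"
  proof (cases "t = 1")
    case True
    then show ?thesis
      using md_le_topics[of 1] by simp
  next
    case False
    then show ?thesis
      using assms md_le_half_succ by simp
  qed
  then show ?thesis
    unfolding ceiling_succ_half by simp
qed

end
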